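(* For every $x^*\in J^*$, $$\|x^*\|_*=\sup\{x^*(x):\ x\in J\text{ has NPR hereditarily and }\|x\|_2=1\}.$$
   Context: For a real sequence $x=(x(n))_{n\in\mathbb N}$ let $\|x\|_J=\sup\bigl(\sum_{i=1}^n|\sum_{k\in I_i}x(k)|^2\bigr)^{1/2}$ over all $n$ and all families of pairwise disjoint intervals $I_1,\dots,I_n$ of $\mathbb N$ (intervals: nonempty sets of consecutive positive integers, possibly infinite). $J=\{x:\|x\|_J<\infty\}$; $J^*$ is its dual with norm $\|\cdot\|_*$; $\|\cdot\|_2$ is the $\ell_2$ norm; for $x\in J$ the series $\sum_{n\in I}x(n)$ converge for every interval $I$. For $A\subset\mathbb N$, $x|_A$ equals $x$ on $A$ and $0$ off $A$. A vector $x\in J$ has non-positive remainder (NPR) if $|\sum_n x(n)|^2\le\sum_n|x(n)|^2$; it has NPR hereditarily if $x|_I$ has NPR for every interval $I$ of $\mathbb N$. *)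

theory Defs
  imports "HOL-Analysis.Analysis"
begin

(* The index set \<nat> of the paper (positive integers) is modelled by the type nat
   (0-based); this is only an order-preserving relabelling of indices. *)

definition nat_interval :: "nat set \<Rightarrow> bool" where
  "nat_interval I \<longleftrightarrow> I \<noteq> {} \<and>
     (\<forall>m n k. m \<in> I \<longrightarrow> n \<in> I \<longrightarrow> m \<le> k \<longrightarrow> k \<le> n \<longrightarrow> k \<in> I)"

definition isum :: "(nat \<Rightarrow> real) \<Rightarrow> nat set \<Rightarrow> real" where
  "isum x I = (if finite I then sum x I else (\<Sum>n. x (n + (LEAST k. k \<in> I))))"

definition J_vals :: "(nat \<Rightarrow> real) \<Rightarrow> real set" where
  "J_vals x = {sqrt (\<Sum>I\<in>F. (isum x I)\<^sup>2) | F.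
      finite F \<and> (\<forall>I\<in>F. nat_interval I) \<and> pairwise disjnt F}"

definition J_norm :: "(nat \<Rightarrow> real) \<Rightarrow> real" where
  "J_norm x = Sup (J_vals x)"

definition inJ :: "(nat \<Rightarrow> real) \<Rightarrow> bool" where
  "inJ x \<longleftrightarrow> summable x \<and> bdd_above (J_vals x)"

definition inJdual :: "((nat \<Rightarrow> real) \<Rightarrow> real) \<Rightarrow> bool" where
  "inJdual f \<longleftrightarrow>
     (\<forall>x y a b. inJ x \<longrightarrow> inJ y \<longrightarrow> f (\<lambda>n. a * x n + b * y n) = a * f x + b * f y) \<and>
     (\<exists>C. \<forall>x. inJ x \<longrightarrow> \<bar>f x\<bar> \<le> C * J_norm x)"

definition dual_norm :: "((nat \<Rightarrow> real) \<Rightarrow> real) \<Rightarrow> real" where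
  "dual_norm f = Sup {\<bar>f x\<bar> | x. inJ x \<and> J_norm x \<le> 1}"

definition l2_norm_seq :: "(nat \<Rightarrow> real) \<Rightarrow> real" where
  "l2_norm_seq x = sqrt (\<Sum>n. (x n)\<^sup>2)"

definition restr :: "(nat \<Rightarrow> real) \<Rightarrow> nat set \<Rightarrow> nat \<Rightarrow> real" where
  "restr x A = (\<lambda>n. if n \<in> A then x n else 0)"

definition NPR :: "(nat \<Rightarrow> real) \<Rightarrow> bool" where
  "NPR x \<longleftrightarrow> \<bar>\<Sum>n. x n\<bar>\<^sup>2 \<le> (\<Sum>n. \<bar>x n\<bar>\<^sup>2)"

definition NPR_hered :: "(nat \<Rightarrow> real) \<Rightarrow> bool" where
  "NPR_hered x \<longleftrightarrow> (\<forall>I. nat_interval I \<longrightarrow> NPR (restr x I))"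

end

theory Submission
  imports Defs
begin

(* If x has NPR hereditarily, the NPR inequality on each interval of a disjoint family gives
   sum_i |sum_(I_i) x|^2 <= sum_i sum_(I_i) |x|^2 <= ||x||_2^2, so ||x||_J <= ||x||_2 and the
   supremum is at most ||x*||_*.

   Conversely, tails of vectors of J have small J-norm, so it suffices to bound x*(y) for y in the
   unit ball of J supported on {0..<n}. For such y the unit ball is cut out by finitely many
   constraints, one for each partition 0 = p_0 < ... < p_m = n: the squared block sums of y add up
   to at most 1. If the finest partition is not active (that is, ||y||_2 < 1), an exchange argument
   shows that some node k lies on no active partition. Moving y along +-(e_(k-1) - e_k), whose
   partial sums vanish off k, keeps every active constraint active and does not decrease x*(y);
   stopping at the first constraint that becomes active strictly reduces the number of inactive
   ones. The process ends with the finest partition active, i.e. ||y||_2 = 1, and then comparing it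
   with the partition that merges the blocks of an interval I gives NPR for y restricted to I. *)

section \<open>Intervals and interval sums\<close>

lemma nat_interval_memI:
  "nat_interval I \<Longrightarrow> m \<in> I \<Longrightarrow> n \<in> I \<Longrightarrow> m \<le> k \<Longrightarrow> k \<le> n \<Longrightarrow> k \<in> I"
  unfolding nat_interval_def by blast

lemma nat_interval_nonempty: "nat_interval I \<Longrightarrow> I \<noteq> {}"
  unfolding nat_interval_def by blast

lemma nat_interval_atLeastLessThan: "a < b \<Longrightarrow> nat_interval {a..<b}"
  unfolding nat_interval_def by auto

lemma nat_interval_atLeast: "nat_interval {a..}"
  unfolding nat_interval_def by auto

lemma nat_interval_singleton: "nat_interval {a}"
  using nat_interval_atLeastLessThan[of a "Suc a"] by simp

lemma nat_interval_Int_atLeastLessThan: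
  "nat_interval I \<Longrightarrow> I \<inter> {a..<b} \<noteq> {} \<Longrightarrow> nat_interval (I \<inter> {a..<b})"
  unfolding nat_interval_def[of "I \<inter> {a..<b}"] using nat_interval_memI[of I] by auto

lemma nat_interval_infinite:
  assumes "nat_interval I" "infinite I"
  shows "I = {(LEAST k. k \<in> I)..}"
proof
  show "I \<subseteq> {(LEAST k. k \<in> I)..}" by (auto intro: Least_le)
  have least: "(LEAST k. k \<in> I) \<in> I"
    using nat_interval_nonempty[OF assms(1)] by (auto intro: LeastI)
  show "{(LEAST k. k \<in> I)..} \<subseteq> I"
  proof
    fix k assume "k \<in> {(LEAST k. k \<in> I)..}"
    moreover obtain j where "j \<in> I" "k \<le> j"
      using assms(2) unfolding infinite_nat_iff_unbounded_le by blast
    ultimately show "k \<in> I" using nat_interval_memI[OF assms(1) least \<open>j \<in> I\<close>, of k] by simp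
  qed
qed

lemma nat_interval_finite:
  assumes "nat_interval I" "finite I"
  shows "I = {Min I..Max I}"
proof
  show "I \<subseteq> {Min I..Max I}" using assms(2) by auto
  show "{Min I..Max I} \<subseteq> I"
    using nat_interval_memI[OF assms(1) Min_in[OF assms(2)] Max_in[OF assms(2)]]
      nat_interval_nonempty[OF assms(1)] by auto
qed

lemma sum_restr: "finite B \<Longrightarrow> sum (restr x A) B = sum x (B \<inter> A)"
  unfolding restr_def by (rule sum.inter_restrict[symmetric])

lemma restr_restr: "restr (restr x A) B = restr x (A \<inter> B)"
  unfolding restr_def by auto

lemma restr_sums_isum:
  assumes "summable x" "nat_interval I"
  shows "restr x I sums isum x I"
proof (cases "finite I")
  case True
  have "restr x I sums sum (restr x I) I" using True by (intro sums_finite) (auto simp: restr_def)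
  moreover have "sum (restr x I) I = sum x I" by (rule sum.cong) (auto simp: restr_def)
  ultimately show ?thesis using True by (simp add: isum_def)
next
  case False
  define m where "m = (LEAST k. k \<in> I)"
  have I: "I = {m..}" unfolding m_def by (rule nat_interval_infinite[OF assms(2) False])
  have "(\<lambda>j. x (j + m)) sums (\<Sum>j. x (j + m))"
    using summable_ignore_initial_segment[OF assms(1)] by (rule summable_sums)
  moreover have "(\<lambda>j. restr x I (j + m)) = (\<lambda>j. x (j + m))" "sum (restr x I) {..<m} = 0"
    by (auto simp: restr_def I)
  ultimately have "restr x I sums (\<Sum>j. x (j + m))"
    using sums_iff_shift[of "restr x I" m] by simp
  then show ?thesis using False by (simp add: isum_def m_def)
qed

lemma isum_eq_suminf_restr: "summable x \<Longrightarrow> nat_interval I \<Longrightarrow> isum x I = (\<Sum>n. restr x I n)"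
  by (rule sums_unique[OF restr_sums_isum])

lemma isum_finite_support:
  assumes "\<And>k. n \<le> k \<Longrightarrow> y k = 0" "nat_interval I"
  shows "isum y I = sum y (I \<inter> {..<n})"
proof -
  have "summable y" using assms(1) by (intro summable_finite[of "{..<n}"]) auto
  moreover have "restr y I sums sum (restr y I) (I \<inter> {..<n})"
    using assms(1) by (intro sums_finite) (auto simp: restr_def)
  ultimately have "isum y I = sum (restr y I) (I \<inter> {..<n})"
    using restr_sums_isum[OF _ assms(2)] sums_unique2 by metis
  also have "\<dots> = sum y (I \<inter> {..<n})" by (rule sum.cong) (auto simp: restr_def)
  finally show ?thesis .
qed

lemma isum_diff:
  assumes "summable x" "summable y" "nat_interval I"
  shows "isum (\<lambda>n. x n - y n) I = isum x I - isum y I"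
proof -
  have "restr (\<lambda>n. x n - y n) I = (\<lambda>n. restr x I n - restr y I n)" by (auto simp: restr_def)
  then have "restr (\<lambda>n. x n - y n) I sums (isum x I - isum y I)"
    using sums_diff[OF restr_sums_isum[OF assms(1,3)] restr_sums_isum[OF assms(2,3)]] by simp
  with restr_sums_isum[OF summable_diff[OF assms(1,2)] assms(3)] show ?thesis
    using sums_unique2 by blast
qed

section \<open>The James norm\<close>

definition interval_family :: "nat set \<Rightarrow> nat set set \<Rightarrow> bool" where
  "interval_family W F \<longleftrightarrow> finite F \<and> (\<forall>I\<in>F. nat_interval I \<and> I \<subseteq> W) \<and> pairwise disjnt F"

lemma J_vals_eq: "J_vals x = {sqrt (\<Sum>I\<in>F. (isum x I)\<^sup>2) | F. interval_family UNIV F}"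
  unfolding J_vals_def interval_family_def by simp

lemma interval_family_mono: "interval_family V F \<Longrightarrow> V \<subseteq> W \<Longrightarrow> interval_family W F"
  unfolding interval_family_def by blast

lemma interval_family_Un:
  assumes "interval_family V F" "interval_family W G" "V \<inter> W = {}"
  shows "interval_family (V \<union> W) (F \<union> G)" "F \<inter> G = {}"
proof -
  have cross: "disjnt I J \<and> disjnt J I" if "I \<in> F" "J \<in> G" for I J
    using that assms unfolding interval_family_def disjnt_def by blast
  have "pairwise disjnt (F \<union> G)"
  proof (rule pairwiseI)
    fix I J assume "I \<in> F \<union> G" "J \<in> F \<union> G" "I \<noteq> J"
    then show "disjnt I J"
      using cross assms(1,2) unfolding interval_family_def pairwise_def by auto
  qed
  then show "interval_family (V \<union> W) (F \<union> G)"
    using assms(1,2) unfolding interval_family_def by auto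
  have "I = {}" if "I \<in> F" "I \<in> G" for I
    using that assms unfolding interval_family_def by blast
  then show "F \<inter> G = {}"
    using assms(1) nat_interval_nonempty unfolding interval_family_def by blast
qed

lemma J_norm_upper:
  "inJ x \<Longrightarrow> interval_family UNIV F \<Longrightarrow> sqrt (\<Sum>I\<in>F. (isum x I)\<^sup>2) \<le> J_norm x"
  unfolding J_norm_def inJ_def J_vals_eq by (rule cSup_upper) auto

lemma sum_isum_sq_le_J_norm:
  assumes "inJ x" "interval_family W F"
  shows "(\<Sum>I\<in>F. (isum x I)\<^sup>2) \<le> (J_norm x)\<^sup>2"
proof -
  have nonneg: "0 \<le> (\<Sum>I\<in>F. (isum x I)\<^sup>2)" by (intro sum_nonneg) auto
  have "sqrt (\<Sum>I\<in>F. (isum x I)\<^sup>2) \<le> J_norm x"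
    using assms interval_family_mono J_norm_upper by blast
  with nonneg have "(sqrt (\<Sum>I\<in>F. (isum x I)\<^sup>2))\<^sup>2 \<le> (J_norm x)\<^sup>2"
    by (intro power_mono) auto
  with nonneg show ?thesis by simp
qed

lemma J_norm_least: "(\<And>F. interval_family UNIV F \<Longrightarrow> sqrt (\<Sum>I\<in>F. (isum x I)\<^sup>2) \<le> B) \<Longrightarrow> J_norm x \<le> B"
  unfolding J_norm_def J_vals_eq
  by (rule cSup_least) (auto intro: exI[of _ "{}"] simp: interval_family_def)

lemma J_norm_nonneg: "inJ x \<Longrightarrow> 0 \<le> J_norm x"
  using J_norm_upper[of x "{}"] by (simp add: interval_family_def)

lemma inJ_finite_support:
  assumes supp: "\<And>k. n \<le> k \<Longrightarrow> y k = 0"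
  shows "inJ y"
proof -
  have "sqrt (\<Sum>I\<in>F. (isum y I)\<^sup>2) \<le> (\<Sum>k<n. \<bar>y k\<bar>)" if F: "interval_family UNIV F" for F
  proof -
    have fin: "finite F" and disj: "pairwise disjnt F" and ivl: "\<And>I. I \<in> F \<Longrightarrow> nat_interval I"
      using F unfolding interval_family_def by auto
    have "sqrt (\<Sum>I\<in>F. (isum y I)\<^sup>2) \<le> (\<Sum>I\<in>F. \<bar>isum y I\<bar>)"
      using L2_set_le_sum_abs unfolding L2_set_def .
    also have "\<dots> \<le> (\<Sum>I\<in>F. \<Sum>k\<in>I \<inter> {..<n}. \<bar>y k\<bar>)"
      by (intro sum_mono) (simp add: isum_finite_support[OF supp ivl] sum_abs)
    also have "\<dots> = (\<Sum>k\<in>(\<Union>I\<in>F. I \<inter> {..<n}). \<bar>y k\<bar>)"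
      using fin disj by (intro sum.UNION_disjoint[symmetric]) (auto simp: pairwise_def disjnt_def)
    also have "\<dots> \<le> (\<Sum>k<n. \<bar>y k\<bar>)" by (intro sum_mono2) auto
    finally show ?thesis .
  qed
  moreover have "summable y" using supp by (intro summable_finite[of "{..<n}"]) auto
  ultimately show ?thesis unfolding inJ_def J_vals_eq bdd_above_def by blast
qed

lemma inJ_diff:
  assumes "inJ x" "inJ y"
  shows "inJ (\<lambda>n. x n - y n)"
proof -
  have sx: "summable x" and sy: "summable y" using assms unfolding inJ_def by auto
  have "sqrt (\<Sum>I\<in>F. (isum (\<lambda>n. x n - y n) I)\<^sup>2) \<le> J_norm x + J_norm y"
    if F: "interval_family UNIV F" for F
  proof -
    have "sqrt (\<Sum>I\<in>F. (isum (\<lambda>n. x n - y n) I)\<^sup>2) = L2_set (\<lambda>I. isum x I + - isum y I) F"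
      unfolding L2_set_def using F isum_diff[OF sx sy]
      by (intro arg_cong[where f=sqrt] sum.cong) (auto simp: interval_family_def)
    also have "\<dots> \<le> L2_set (isum x) F + L2_set (\<lambda>I. - isum y I) F" by (rule L2_set_triangle_ineq)
    also have "\<dots> \<le> J_norm x + J_norm y"
      using J_norm_upper[OF assms(1) F] J_norm_upper[OF assms(2) F] by (simp add: L2_set_def)
    finally show ?thesis .
  qed
  then show ?thesis
    using summable_diff[OF sx sy] unfolding inJ_def J_vals_eq bdd_above_def by blast
qed

lemma summable_sq_inJ:
  assumes "inJ x"
  shows "summable (\<lambda>j. (x j)\<^sup>2)"
proof (rule summableI_nonneg_bounded)
  fix m
  let ?F = "(\<lambda>j::nat. {j}) ` {..<m}"
  have "interval_family UNIV ?F"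
    unfolding interval_family_def by (auto simp: nat_interval_singleton pairwise_def disjnt_def)
  moreover have "(\<Sum>I\<in>?F. (isum x I)\<^sup>2) = (\<Sum>j<m. (x j)\<^sup>2)"
    by (subst sum.reindex) (auto simp: inj_on_def isum_def)
  ultimately show "(\<Sum>j<m. (x j)\<^sup>2) \<le> (J_norm x)\<^sup>2"
    using sum_isum_sq_le_J_norm[OF assms] by metis
qed simp

lemma sum_restr_sq_le:
  assumes "finite F" "pairwise disjnt F"
  shows "(\<Sum>I\<in>F. (restr x I n)\<^sup>2) \<le> (x n)\<^sup>2"
proof (cases "\<exists>I\<in>F. n \<in> I")
  case True
  then obtain I where I: "I \<in> F" "n \<in> I" by blast
  have "n \<notin> J" if "J \<in> F - {I}" for J
    using assms(2) I that unfolding pairwise_def disjnt_def by blast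
  then have "(\<Sum>J\<in>F - {I}. (restr x J n)\<^sup>2) = 0" by (simp add: restr_def)
  then show ?thesis using sum.remove[OF assms(1) I(1), of "\<lambda>J. (restr x J n)\<^sup>2"] I(2)
    by (simp add: restr_def)
next
  case False
  then show ?thesis by (simp add: restr_def)
qed

theorem J_norm_le_l2_norm:
  assumes x: "inJ x" and npr: "NPR_hered x"
  shows "J_norm x \<le> l2_norm_seq x"
proof (rule J_norm_least)
  fix F assume F: "interval_family UNIV F"
  then have fin: "finite F" and disj: "pairwise disjnt F" and ivl: "\<And>I. I \<in> F \<Longrightarrow> nat_interval I"
    unfolding interval_family_def by auto
  have sx: "summable x" using x unfolding inJ_def by simp
  have sq: "summable (\<lambda>j. (x j)\<^sup>2)" using summable_sq_inJ[OF x] .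
  have sr: "summable (\<lambda>n. (restr x I n)\<^sup>2)" for I
    by (rule summable_comparison_test[OF _ sq]) (auto simp: restr_def)
  have "(isum x I)\<^sup>2 \<le> (\<Sum>n. (restr x I n)\<^sup>2)" if "I \<in> F" for I
    using npr ivl[OF that] isum_eq_suminf_restr[OF sx ivl[OF that]]
    unfolding NPR_hered_def NPR_def by simp
  then have "(\<Sum>I\<in>F. (isum x I)\<^sup>2) \<le> (\<Sum>I\<in>F. \<Sum>n. (restr x I n)\<^sup>2)" by (rule sum_mono)
  also have "\<dots> = (\<Sum>n. \<Sum>I\<in>F. (restr x I n)\<^sup>2)" using sr by (rule suminf_sum[symmetric])
  also have "\<dots> \<le> (\<Sum>n. (x n)\<^sup>2)"
    using sum_restr_sq_le[OF fin disj] summable_sum[OF sr] sq by (rule suminf_le)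
  finally show "sqrt (\<Sum>I\<in>F. (isum x I)\<^sup>2) \<le> l2_norm_seq x"
    unfolding l2_norm_seq_def by (rule real_sqrt_le_mono)
qed

section \<open>Tails of vectors in J\<close>

lemma interval_family_truncate:
  fixes a b :: nat and x :: "nat \<Rightarrow> real"
  assumes F: "interval_family UNIV F"
  defines "G \<equiv> (\<lambda>I. I \<inter> {a..<b}) ` F - {{}}"
  shows "interval_family {a..<b} G" "(\<Sum>J\<in>G. (isum x J)\<^sup>2) = (\<Sum>I\<in>F. (sum x (I \<inter> {a..<b}))\<^sup>2)"
proof -
  have fin: "finite F" and disj: "pairwise disjnt F" and ivl: "\<And>I. I \<in> F \<Longrightarrow> nat_interval I"
    using F unfolding interval_family_def by auto
  have "J \<in> G \<Longrightarrow> nat_interval J" for J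
    unfolding G_def using ivl nat_interval_Int_atLeastLessThan by blast
  moreover have "pairwise disjnt G"
    using disj unfolding G_def pairwise_def disjnt_def by blast
  ultimately show "interval_family {a..<b} G"
    unfolding interval_family_def G_def using fin by blast
  have "(\<Sum>J\<in>(\<lambda>I. I \<inter> {a..<b}) ` F. (sum x J)\<^sup>2) = (\<Sum>I\<in>F. (sum x (I \<inter> {a..<b}))\<^sup>2)"
  proof (subst sum.reindex_nontrivial[OF fin])
    fix I I' assume "I \<in> F" "I' \<in> F" "I \<noteq> I'" "I \<inter> {a..<b} = I' \<inter> {a..<b}"
    then have "I \<inter> {a..<b} = {}" using disj unfolding pairwise_def disjnt_def by blast
    then show "(sum x (I \<inter> {a..<b}))\<^sup>2 = 0" by simp
  qed simp
  moreover have "(\<Sum>J\<in>G. (isum x J)\<^sup>2) = (\<Sum>J\<in>G. (sum x J)\<^sup>2)"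
    by (rule sum.cong) (auto simp: G_def isum_def)
  moreover have "\<dots> = (\<Sum>J\<in>(\<lambda>I. I \<inter> {a..<b}) ` F. (sum x J)\<^sup>2)"
    unfolding G_def using fin by (intro sum.mono_neutral_left) auto
  ultimately show "(\<Sum>J\<in>G. (isum x J)\<^sup>2) = (\<Sum>I\<in>F. (sum x (I \<inter> {a..<b}))\<^sup>2)" by simp
qed

lemma tail_interval_family:
  assumes x: "inJ x" and e: "0 \<le> e" and tail: "e < J_norm (restr x {N..})"
  shows "\<exists>M G. interval_family {N..<M} G \<and> e\<^sup>2 < (\<Sum>I\<in>G. (isum x I)\<^sup>2)"
proof -
  define r where "r = restr x {N..}"
  have sr: "summable r"
    using x restr_sums_isum[OF _ nat_interval_atLeast] unfolding r_def inJ_def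
    by (blast intro: sums_summable)
  obtain F where F: "interval_family UNIV F" and "e < sqrt (\<Sum>I\<in>F. (isum r I)\<^sup>2)"
    using tail J_norm_least[of r e] unfolding r_def by force
  then have "e\<^sup>2 < (sqrt (\<Sum>I\<in>F. (isum r I)\<^sup>2))\<^sup>2"
    using e by (intro power_strict_mono) auto
  then have big: "e\<^sup>2 < (\<Sum>I\<in>F. (isum r I)\<^sup>2)" by (simp add: sum_nonneg)
  have "(\<lambda>M. sum x (I \<inter> {N..<M})) \<longlonglongrightarrow> isum r I" if "I \<in> F" for I
  proof -
    have "restr r I sums isum r I"
      using F sr restr_sums_isum that unfolding interval_family_def by blast
    moreover have "{..<M} \<inter> ({N..} \<inter> I) = I \<inter> {N..<M}" for M by auto
    ultimately show ?thesis unfolding sums_def r_def restr_restr by (simp add: sum_restr)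
  qed
  then have "(\<lambda>M. \<Sum>I\<in>F. (sum x (I \<inter> {N..<M}))\<^sup>2) \<longlonglongrightarrow> (\<Sum>I\<in>F. (isum r I)\<^sup>2)"
    by (intro tendsto_intros)
  from order_tendstoD(1)[OF this big]
  obtain M where "e\<^sup>2 < (\<Sum>I\<in>F. (sum x (I \<inter> {N..<M}))\<^sup>2)"
    unfolding eventually_sequentially by blast
  then show ?thesis
    using interval_family_truncate(1)[OF F, of N M]
      interval_family_truncate(2)[OF F, where a=N and b=M]
    by metis
qed

(* Otherwise blocks of squared weight (e/2)^2 could be collected further and further out,
   disjoint from the earlier ones, without bound. *)
lemma J_norm_tail_small:
  assumes x: "inJ x" and e: "0 < e"
  shows "\<exists>N\<ge>N0. J_norm (restr x {N..}) < e"
proof (rule ccontr)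
  assume "\<not> ?thesis"
  then have big: "e / 2 < J_norm (restr x {N..})" if "N0 \<le> N" for N
    using that e by force
  have "\<exists>M G. interval_family {..<M} G \<and> real k * (e / 2)\<^sup>2 \<le> (\<Sum>I\<in>G. (isum x I)\<^sup>2)" for k
  proof (induction k)
    case 0
    show ?case by (rule exI[of _ 0], rule exI[of _ "{}"]) (simp add: interval_family_def)
  next
    case (Suc k)
    then obtain M G where G: "interval_family {..<M} G"
      and k: "real k * (e / 2)\<^sup>2 \<le> (\<Sum>I\<in>G. (isum x I)\<^sup>2)" by blast
    obtain M' G' where G': "interval_family {max M N0..<M'} G'"
      and one: "(e / 2)\<^sup>2 < (\<Sum>I\<in>G'. (isum x I)\<^sup>2)"
      using tail_interval_family[OF x _ big[of "max M N0"]] e by auto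
    have disj: "{..<M} \<inter> {max M N0..<M'} = {}" by auto
    have "interval_family {..<max M M'} (G \<union> G')"
      using interval_family_Un(1)[OF G G' disj] by (rule interval_family_mono) auto
    moreover have "(\<Sum>I\<in>G \<union> G'. (isum x I)\<^sup>2) = (\<Sum>I\<in>G. (isum x I)\<^sup>2) + (\<Sum>I\<in>G'. (isum x I)\<^sup>2)"
      using G G' interval_family_Un(2)[OF G G' disj] unfolding interval_family_def
      by (intro sum.union_disjoint) auto
    ultimately show ?case
      using k one by (intro exI[of _ "max M M'"] exI[of _ "G \<union> G'"]) (simp add: algebra_simps)
  qed
  then have bound: "real k * (e / 2)\<^sup>2 \<le> (J_norm x)\<^sup>2" for k
    using sum_isum_sq_le_J_norm[OF x] by (meson order_trans)
  obtain k where "(J_norm x)\<^sup>2 / (e / 2)\<^sup>2 < real k" using reals_Archimedean2 by blast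
  with bound[of k] e show False by (simp add: divide_less_eq)
qed

section \<open>Partitions and quadratic variation\<close>

definition psum :: "(nat \<Rightarrow> real) \<Rightarrow> nat \<Rightarrow> real" where
  "psum y j = sum y {..<j}"

fun qvar :: "(nat \<Rightarrow> real) \<Rightarrow> nat list \<Rightarrow> real" where
  "qvar s (a # b # ps) = (s b - s a)\<^sup>2 + qvar s (b # ps)"
| "qvar s _ = 0"

(* A partition of {0..<n} into the consecutive blocks {p_i..<p_(i+1)} is recorded by its endpoint
   list 0 = p_0 < ... < p_m = n; then qvar (psum y) of that list is the sum of the squared block
   sums of y. *)

definition partitions :: "nat \<Rightarrow> nat list set" where
  "partitions n = {ps. sorted_wrt (<) ps \<and> ps \<noteq> [] \<and> hd ps = 0 \<and> last ps = n}"

lemma qvar_append: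
  "xs \<noteq> [] \<Longrightarrow> qvar s (xs @ b # ys) = qvar s xs + (s b - s (last xs))\<^sup>2 + qvar s (b # ys)"
  by (induction s xs rule: qvar.induct) auto

lemma qvar_cong: "(\<And>j. j \<in> set xs \<Longrightarrow> s j = s' j) \<Longrightarrow> qvar s xs = qvar s' xs"
  by (induction s xs rule: qvar.induct) auto

lemma qvar_uminus: "qvar (\<lambda>j. - s j) xs = qvar s xs"
  by (induction s xs rule: qvar.induct) (auto simp: power2_commute)

lemma continuous_on_qvar_line: "continuous_on A (\<lambda>t. qvar (\<lambda>j. a j + t * b j) xs)"
  by (induction xs rule: induct_list012) (auto intro!: continuous_intros)

lemma qvar_upt: "a \<le> b \<Longrightarrow> qvar s [a..<Suc b] = (\<Sum>k\<in>{a..<b}. (s (Suc k) - s k)\<^sup>2)"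
proof (induction b)
  case (Suc b)
  show ?case
  proof (cases "a = Suc b")
    case False
    then have "a \<le> b" using Suc.prems by simp
    then have "qvar s [a..<Suc (Suc b)] = qvar s [a..<Suc b] + (s (Suc b) - s b)\<^sup>2"
      using qvar_append[of "[a..<Suc b]" s "Suc b" "[]"] by simp
    with Suc.IH[OF \<open>a \<le> b\<close>] \<open>a \<le> b\<close> show ?thesis by simp
  qed simp
qed simp

lemma psum_diff: "a \<le> b \<Longrightarrow> psum y b - psum y a = sum y {a..<b}"
  unfolding psum_def
  by (metis atLeast0LessThan sum.atLeastLessThan_concat zero_le add_diff_cancel_left')

lemma qvar_psum_upt: "a \<le> b \<Longrightarrow> qvar (psum y) [a..<Suc b] = (\<Sum>k\<in>{a..<b}. (y k)\<^sup>2)"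
  using qvar_upt[of a b "psum y"] by (simp add: psum_def del: upt_Suc)

lemma psum_add_scaled: "psum (\<lambda>j. y j + t * d j) = (\<lambda>k. psum y k + t * psum d k)"
  unfolding psum_def by (auto simp: sum.distrib sum_distrib_left)

lemma sorted_wrt_less_le_last: "sorted_wrt (<) xs \<Longrightarrow> x \<in> set xs \<Longrightarrow> x \<le> (last xs :: nat)"
  by (induction xs) (auto simp: less_imp_le)

lemma sorted_wrt_less_Cons_Cons:
  "sorted_wrt (<) (b # ys) \<Longrightarrow> a < b \<Longrightarrow> sorted_wrt (<) (a # b # (ys :: nat list))"
  by auto

lemma partitions_append:
  assumes "sorted_wrt (<) xs" "xs \<noteq> []" "hd xs = 0"
    and "sorted_wrt (<) ys" "ys \<noteq> []" "last ys = n" "last xs < hd ys"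
  shows "xs @ ys \<in> partitions n"
proof -
  have "x < y" if "x \<in> set xs" "y \<in> set ys" for x y
    using sorted_wrt_less_le_last[OF assms(1) that(1)] that(2) assms(4,5,7)
    by (cases ys) auto
  then show ?thesis using assms unfolding partitions_def by (auto simp: sorted_wrt_append)
qed

lemma partitions_appendD:
  assumes "xs @ ys \<in> partitions n" "xs \<noteq> []" "ys \<noteq> []"
  shows "sorted_wrt (<) xs" "hd xs = 0" "sorted_wrt (<) ys" "last ys = n" "last xs < hd ys"
  using assms unfolding partitions_def by (auto simp: sorted_wrt_append)

lemma upt_in_partitions: "[0..<Suc n] \<in> partitions n"
  unfolding partitions_def by (simp add: sorted_wrt_upt hd_upt del: upt_Suc)

lemma finite_partitions: "finite (partitions n)"
proof (rule finite_subset)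
  show "partitions n \<subseteq> {xs. set xs \<subseteq> {..n} \<and> length xs \<le> Suc n}"
  proof
    fix xs assume "xs \<in> partitions n"
    then have xs: "sorted_wrt (<) xs" "last xs = n" unfolding partitions_def by auto
    then have "set xs \<subseteq> {..n}" using sorted_wrt_less_le_last by auto
    moreover have "length xs = card (set xs)"
      using xs(1) by (simp add: strict_sorted_iff distinct_card)
    moreover have "card (set xs) \<le> Suc n" using card_mono[OF _ \<open>set xs \<subseteq> {..n}\<close>] by simp
    ultimately show "xs \<in> {xs. set xs \<subseteq> {..n} \<and> length xs \<le> Suc n}" by simp
  qed
  show "finite {xs. set xs \<subseteq> {..n} \<and> length xs \<le> Suc n}" by (rule finite_lists_length_le) simp
qed

fun blocks :: "nat list \<Rightarrow> nat set list" where
  "blocks (a # b # ps) = {a..<b} # blocks (b # ps)"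
| "blocks _ = []"

lemma blocks_interval_family:
  "sorted_wrt (<) ps \<Longrightarrow> interval_family {hd ps..} (set (blocks ps)) \<and> distinct (blocks ps)"
proof (induction ps rule: blocks.induct)
  case (1 a b ps)
  then have ab: "a < b"
    and IH: "interval_family {b..} (set (blocks (b # ps)))" "distinct (blocks (b # ps))" by auto
  have "interval_family {a..<b} {{a..<b}}"
    using nat_interval_atLeastLessThan[OF ab] by (simp add: interval_family_def)
  moreover have "{a..<b} \<inter> {b..} = {}" by auto
  ultimately have "interval_family ({a..<b} \<union> {b..}) ({{a..<b}} \<union> set (blocks (b # ps)))"
    and "{{a..<b}} \<inter> set (blocks (b # ps)) = {}"
    using interval_family_Un IH(1) by blast+
  moreover have "{a..<b} \<union> {b..} \<subseteq> {a..}" using ab by auto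
  ultimately show ?case using IH(2) by (auto intro: interval_family_mono)
qed (auto simp: interval_family_def)

lemma qvar_psum_blocks:
  "sorted_wrt (<) ps \<Longrightarrow> qvar (psum x) ps = (\<Sum>I\<leftarrow>blocks ps. (isum x I)\<^sup>2)"
  by (induction ps rule: blocks.induct) (auto simp: isum_def psum_diff)

lemma qvar_psum_le_J_norm:
  assumes "inJ x" "sorted_wrt (<) ps"
  shows "qvar (psum x) ps \<le> (J_norm x)\<^sup>2"
proof -
  have "interval_family {hd ps..} (set (blocks ps))" "distinct (blocks ps)"
    using blocks_interval_family[OF assms(2)] by auto
  then show ?thesis using sum_isum_sq_le_J_norm[OF assms(1)]
    by (simp add: qvar_psum_blocks[OF assms(2)] sum_list_distinct_conv_sum_set)
qed

section \<open>Maximal partitions\<close>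

lemma four_point_exchange:
  fixes P T T' X :: real
  assumes "(T - P)\<^sup>2 + (T' - T)\<^sup>2 \<le> (T' - P)\<^sup>2" "(T' - T)\<^sup>2 + (X - T')\<^sup>2 \<le> (X - T)\<^sup>2" "T' \<noteq> T"
  shows "(X - T)\<^sup>2 + (T' - P)\<^sup>2 \<le> (T' - T)\<^sup>2 + (X - P)\<^sup>2"
proof -
  have "0 \<le> (T - P) * (T' - T)" "0 \<le> (T' - T) * (X - T')"
    using assms(1,2) by (simp_all add: power2_eq_square algebra_simps)
  then have "0 \<le> (T - P) * (X - T')"
    using assms(3) by (cases "T < T'") (auto simp: zero_le_mult_iff)
  then show ?thesis by (simp add: power2_eq_square algebra_simps)
qed

(* Maximality of B rules out inserting t = last pre into B, maximality of C rules out inserting u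
   into C; four_point_exchange turns these two facts into the exchange inequality. *)
lemma maximal_partitions_exchange:
  assumes max: "\<forall>B\<in>partitions n. qvar s B \<le> M"
    and C: "pre @ c # cs \<in> partitions n" "qvar s (pre @ c # cs) = M" "pre \<noteq> []"
    and B: "bs @ u # bs2 \<in> partitions n" "qvar s (bs @ u # bs2) = M" "bs \<noteq> []"
    and order: "last bs \<le> last pre" "last pre < u" "u < c" and jump: "s u \<noteq> s (last pre)"
  shows "(s c - s (last pre))\<^sup>2 + (s u - s (last bs))\<^sup>2
    \<le> (s u - s (last pre))\<^sup>2 + (s c - s (last bs))\<^sup>2"
proof (cases "last bs = last pre")
  case False
  let ?g = "\<lambda>a b. (s b - s a)\<^sup>2"
  define t where "t = last pre"
  define p where "p = last bs"
  have "p < t" using False order(1) unfolding p_def t_def by simp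
  have "bs @ t # u # bs2 \<in> partitions n"
    using partitions_appendD[OF B(1,3)] B(3) \<open>p < t\<close> order(2) unfolding p_def t_def
    by (intro partitions_append sorted_wrt_less_Cons_Cons) auto
  moreover have "qvar s (bs @ t # u # bs2) = qvar s (bs @ u # bs2) - ?g p u + ?g p t + ?g t u"
    using qvar_append[OF B(3)] unfolding p_def by simp
  ultimately have "?g p t + ?g t u \<le> ?g p u" using max B(2) by fastforce
  moreover have "pre @ u # c # cs \<in> partitions n"
    using partitions_appendD[OF C(1,3)] C(3) order(2,3) unfolding t_def
    by (intro partitions_append sorted_wrt_less_Cons_Cons) auto
  moreover have "qvar s (pre @ u # c # cs) = qvar s (pre @ c # cs) - ?g t c + ?g t u + ?g u c"
    using qvar_append[OF C(3)] unfolding t_def by simp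
  ultimately have "?g t u + ?g u c \<le> ?g t c" "?g p t + ?g t u \<le> ?g p u"
    using max C(2) by fastforce+
  then show ?thesis using four_point_exchange jump unfolding p_def t_def by blast
qed simp

lemma maximal_partition_reroute:
  assumes max: "\<forall>B\<in>partitions n. qvar s B \<le> M"
    and C: "pre @ c # cs \<in> partitions n" "qvar s (pre @ c # cs) = M" "pre \<noteq> []"
    and B: "bs @ u # bs2 \<in> partitions n" "qvar s (bs @ u # bs2) = M" "bs \<noteq> []"
    and order: "last bs \<le> last pre" "last pre < u" "u < c" and jump: "s u \<noteq> s (last pre)"
  shows "pre @ u # bs2 \<in> partitions n" "qvar s (pre @ u # bs2) = M"
proof -
  show C': "pre @ u # bs2 \<in> partitions n"
    using partitions_appendD[OF C(1,3)] partitions_appendD[OF B(1,3)] C(3) order(2)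
    by (intro partitions_append) auto
  have B': "bs @ c # cs \<in> partitions n"
    using partitions_appendD[OF C(1,3)] partitions_appendD[OF B(1,3)] B(3) order
    by (intro partitions_append) auto
  have "qvar s (pre @ u # bs2) \<le> M" "qvar s (bs @ c # cs) \<le> M"
    using max C' B' by blast+
  then show "qvar s (pre @ u # bs2) = M"
    using maximal_partitions_exchange[OF max C B order jump] C(2) B(2)
      qvar_append[OF C(3), of s] qvar_append[OF B(3), of s] by simp
qed

lemma maximal_partition_extend_prefix:
  assumes max: "\<forall>B\<in>partitions n. qvar s B \<le> M"
    and cover: "\<And>k. 0 < k \<Longrightarrow> k < n \<Longrightarrow> \<exists>B\<in>partitions n. qvar s B = M \<and> k \<in> set B"
    and C: "[0..<Suc t] @ ys \<in> partitions n" "qvar s ([0..<Suc t] @ ys) = M" and "t < n"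
  shows "\<exists>ys'. [0..<Suc (Suc t)] @ ys' \<in> partitions n \<and> qvar s ([0..<Suc (Suc t)] @ ys') = M"
proof -
  let ?pre = "[0..<Suc t]"
  have pre: "sorted_wrt (<) ?pre" "?pre \<noteq> []" "hd ?pre = 0" "last ?pre = t"
    by (simp_all add: sorted_wrt_upt hd_upt del: upt_Suc)
  have "ys \<noteq> []" using C(1) \<open>t < n\<close> by (auto simp: partitions_def)
  then obtain c cs where ys: "ys = c # cs" by (cases ys) auto
  have suf: "sorted_wrt (<) (c # cs)" "last (c # cs) = n" and "t < c"
    using partitions_appendD[OF C(1)[unfolded ys]] pre by auto
  consider "c = Suc t" | "Suc t < c" "s (Suc t) = s t" | "Suc t < c" "s (Suc t) \<noteq> s t"
    using \<open>t < c\<close> by linarith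
  then show ?thesis
  proof cases
    case 1
    then show ?thesis using C ys by (intro exI[of _ cs]) simp
  next
    case 2
    have "?pre @ Suc t # c # cs \<in> partitions n"
      using 2 pre suf by (intro partitions_append sorted_wrt_less_Cons_Cons) auto
    moreover have "qvar s (?pre @ Suc t # c # cs) = M"
      using 2 C(2) ys qvar_append[OF pre(2), of s] pre(4) by simp
    ultimately show ?thesis by (intro exI[of _ "c # cs"]) simp
  next
    case 3
    obtain B where B: "B \<in> partitions n" "qvar s B = M" "Suc t \<in> set B"
      using cover[of "Suc t"] 3 suf sorted_wrt_less_le_last[OF suf(1), of c] by auto
    then obtain bs bs2 where Bsplit: "B = bs @ Suc t # bs2" by (meson split_list)
    have "bs \<noteq> []" using B(1) Bsplit by (cases bs) (auto simp: partitions_def)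
    then have "last bs \<le> t" using partitions_appendD(5)[OF B(1)[unfolded Bsplit]] by simp
    then show ?thesis
      using maximal_partition_reroute[OF max C[unfolded ys] pre(2) B(1,2)[unfolded Bsplit]
          \<open>bs \<noteq> []\<close>]
        3 pre(4) by (intro exI[of _ bs2]) simp
  qed
qed

lemma finest_partition_maximal:
  assumes max: "\<forall>B\<in>partitions n. qvar s B \<le> M" and attained: "\<exists>B\<in>partitions n. qvar s B = M"
    and cover: "\<And>k. 0 < k \<Longrightarrow> k < n \<Longrightarrow> \<exists>B\<in>partitions n. qvar s B = M \<and> k \<in> set B"
  shows "qvar s [0..<Suc n] = M"
proof -
  have "\<exists>ys. [0..<Suc t] @ ys \<in> partitions n \<and> qvar s ([0..<Suc t] @ ys) = M" if "t \<le> n" for t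
    using that
  proof (induction t)
    case 0
    obtain B where B: "B \<in> partitions n" "qvar s B = M" using attained by blast
    then have "B = [0..<Suc 0] @ tl B" by (cases B) (auto simp: partitions_def)
    with B show ?case by metis
  next
    case (Suc t)
    then show ?case using maximal_partition_extend_prefix[OF max cover] by auto
  qed
  then obtain ys where ys: "[0..<Suc n] @ ys \<in> partitions n" "qvar s ([0..<Suc n] @ ys) = M"
    by blast
  have "ys = []"
  proof (rule ccontr)
    assume "ys \<noteq> []"
    then have "n < hd ys" "last ys = n" using partitions_appendD[OF ys(1)] by auto
    then show False
      using partitions_appendD(3)[OF ys(1) _ \<open>ys \<noteq> []\<close>] sorted_wrt_less_le_last[of ys "hd ys"]
        \<open>ys \<noteq> []\<close>
      by auto
  qed
  with ys show ?thesis by simp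
qed

section \<open>Finitely supported vectors\<close>

lemma block_sum_sq_le_of_finest_maximal:
  assumes max: "\<forall>ps\<in>partitions n. qvar (psum y) ps \<le> qvar (psum y) [0..<Suc n]"
    and "a < b" "b \<le> n"
  shows "(sum y {a..<b})\<^sup>2 \<le> (\<Sum>k\<in>{a..<b}. (y k)\<^sup>2)"
proof -
  let ?pre = "[0..<Suc a]" and ?suf = "[b..<Suc n]"
  have pre: "sorted_wrt (<) ?pre" "?pre \<noteq> []" "hd ?pre = 0" "last ?pre = a"
    by (simp_all add: sorted_wrt_upt hd_upt del: upt_Suc)
  have suf: "?suf = b # [Suc b..<Suc n]" using \<open>b \<le> n\<close> by (simp add: upt_rec)
  have "?pre @ ?suf \<in> partitions n"
    using pre \<open>a < b\<close> \<open>b \<le> n\<close>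
    by (intro partitions_append) (simp_all add: sorted_wrt_upt hd_upt del: upt_Suc)
  then have "qvar (psum y) (?pre @ ?suf) \<le> qvar (psum y) [0..<Suc n]" using max by blast
  moreover have "qvar (psum y) (?pre @ ?suf)
      = (\<Sum>k\<in>{0..<a}. (y k)\<^sup>2) + (sum y {a..<b})\<^sup>2 + (\<Sum>k\<in>{b..<n}. (y k)\<^sup>2)"
    using qvar_append[OF pre(2), of "psum y" b "[Suc b..<Suc n]"] pre(4) \<open>a < b\<close> \<open>b \<le> n\<close>
    by (simp add: qvar_psum_upt psum_diff suf[symmetric] del: upt_Suc)
  moreover have "qvar (psum y) [0..<Suc n]
      = (\<Sum>k\<in>{0..<a}. (y k)\<^sup>2) + (\<Sum>k\<in>{a..<b}. (y k)\<^sup>2) + (\<Sum>k\<in>{b..<n}. (y k)\<^sup>2)"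
    using \<open>a < b\<close> \<open>b \<le> n\<close>
    by (simp add: qvar_psum_upt sum.atLeastLessThan_concat del: upt_Suc)
  ultimately show ?thesis by simp
qed

lemma NPR_hered_of_finest_maximal:
  assumes supp: "\<And>k. n \<le> k \<Longrightarrow> y k = 0"
    and max: "\<forall>ps\<in>partitions n. qvar (psum y) ps \<le> qvar (psum y) [0..<Suc n]"
  shows "NPR_hered y"
  unfolding NPR_hered_def NPR_def
proof (intro allI impI)
  fix I assume I: "nat_interval I"
  define A where "A = I \<inter> {..<n}"
  have finite_A: "finite A" by (simp add: A_def)
  have outside: "restr y I k = 0" if "k \<notin> A" for k
    using that supp by (auto simp: A_def restr_def)
  have "restr y I sums sum (restr y I) A" "(\<lambda>k. \<bar>restr y I k\<bar>\<^sup>2) sums (\<Sum>k\<in>A. \<bar>restr y I k\<bar>\<^sup>2)"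
    using outside finite_A by (auto intro!: sums_finite)
  moreover have "sum (restr y I) A = sum y A" "(\<Sum>k\<in>A. \<bar>restr y I k\<bar>\<^sup>2) = (\<Sum>k\<in>A. (y k)\<^sup>2)"
    by (auto simp: A_def restr_def intro!: sum.cong)
  ultimately have "restr y I sums sum y A" "(\<lambda>k. \<bar>restr y I k\<bar>\<^sup>2) sums (\<Sum>k\<in>A. (y k)\<^sup>2)"
    by simp_all
  moreover have "(sum y A)\<^sup>2 \<le> (\<Sum>k\<in>A. (y k)\<^sup>2)"
  proof (cases "A = {}")
    case False
    have "nat_interval A" "finite A"
      using nat_interval_Int_atLeastLessThan[OF I, of 0 n] False
      by (simp_all add: A_def atLeast0LessThan)
    then have "A = {Min A..<Suc (Max A)}"
      using nat_interval_finite atLeastLessThanSuc_atLeastAtMost by metis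
    moreover have "Suc (Max A) \<le> n" using Max_in[OF \<open>finite A\<close> False] by (auto simp: A_def)
    ultimately show ?thesis
      using block_sum_sq_le_of_finest_maximal[OF max] False
      by (metis atLeastLessThan_empty not_less)
  qed simp
  ultimately show "\<bar>\<Sum>n. restr y I n\<bar>\<^sup>2 \<le> (\<Sum>n. \<bar>restr y I n\<bar>\<^sup>2)"
    by (simp add: sums_unique[symmetric])
qed

lemma unit_sphere_of_finest_active:
  assumes supp: "\<And>k. n \<le> k \<Longrightarrow> y k = 0"
    and le: "\<forall>ps\<in>partitions n. qvar (psum y) ps \<le> 1" and finest: "qvar (psum y) [0..<Suc n] = 1"
  shows "inJ y \<and> NPR_hered y \<and> l2_norm_seq y = 1"
proof -
  have "(\<Sum>j. (y j)\<^sup>2) = (\<Sum>k<n. (y k)\<^sup>2)" by (rule suminf_finite) (auto simp: supp)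
  also have "\<dots> = 1" using finest qvar_psum_upt[of 0 n y] by (simp add: atLeast0LessThan)
  finally have "l2_norm_seq y = 1" by (simp add: l2_norm_seq_def)
  moreover have "NPR_hered y" using NPR_hered_of_finest_maximal[OF supp] le finest by simp
  moreover have "inJ y" using supp by (rule inJ_finite_support)
  ultimately show ?thesis by blast
qed

lemma exists_direction_fixing_active:
  assumes "1 \<le> n" and le: "\<forall>ps\<in>partitions n. qvar (psum y) ps \<le> 1"
    and finest: "qvar (psum y) [0..<Suc n] \<noteq> 1"
  shows "\<exists>d. (\<forall>k\<ge>n. d k = 0) \<and> (\<exists>k<n. d k \<noteq> 0) \<and>
           (\<forall>ps\<in>partitions n. qvar (psum y) ps = 1 \<longrightarrow> (\<forall>j\<in>set ps. psum d j = 0))"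
proof (cases "\<exists>ps\<in>partitions n. qvar (psum y) ps = 1")
  case False
  then show ?thesis using \<open>1 \<le> n\<close> by (intro exI[of _ "\<lambda>j. if j = 0 then 1 else 0"]) auto
next
  case True
  then obtain k where k: "0 < k" "k < n" "\<forall>ps\<in>partitions n. qvar (psum y) ps = 1 \<longrightarrow> k \<notin> set ps"
    using finest_partition_maximal[OF le True] finest by blast
  \<comment> \<open>the partial sums of \<open>d = e\<^sub>k\<^sub>-\<^sub>1 - e\<^sub>k\<close> vanish everywhere except at \<open>k\<close>\<close>
  define d :: "nat \<Rightarrow> real"
    where "d j = (if j = k - 1 then 1 else 0) - (if j = k then 1 else 0)" for j
  have "psum d j = (if k - 1 < j then 1 else 0) - (if k < j then 1 else 0)" for j
    unfolding psum_def d_def by (simp add: sum_subtractf)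
  then have "psum d j = 0" if "j \<noteq> k" for j using that k(1) by auto
  then have "\<forall>ps\<in>partitions n. qvar (psum y) ps = 1 \<longrightarrow> (\<forall>j\<in>set ps. psum d j = 0)"
    using k(3) by metis
  moreover have "d (k - 1) \<noteq> 0" using k(1) by (simp add: d_def)
  ultimately show ?thesis using k(1,2) by (intro exI[of _ d]) (auto simp: d_def)
qed

lemma first_crossing:
  fixes g :: "'a \<Rightarrow> real \<Rightarrow> real"
  assumes "finite A" and cont: "\<And>a. a \<in> A \<Longrightarrow> continuous_on UNIV (g a)"
    and start: "\<And>a. a \<in> A \<Longrightarrow> g a 0 < c" and "a0 \<in> A" "0 \<le> t0" "c \<le> g a0 t0"
  obtains t a where "0 \<le> t" "a \<in> A" "g a t = c" "\<And>a. a \<in> A \<Longrightarrow> g a t \<le> c"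
proof -
  define Z where "Z = (\<Union>a\<in>A. {t. 0 \<le> t \<and> c \<le> g a t})"
  have "closed Z"
    unfolding Z_def using \<open>finite A\<close> cont
    by (intro closed_UN ballI closed_Collect_conj closed_Collect_le continuous_intros) auto
  moreover have "t0 \<in> Z" "bdd_below Z" using assms(4-6) by (auto simp: Z_def bdd_below_def)
  ultimately have "Inf Z \<in> Z" using closed_contains_Inf by blast
  then obtain a where a: "a \<in> A" "0 \<le> Inf Z" "c \<le> g a (Inf Z)" unfolding Z_def by blast
  have below: "g b (Inf Z) \<le> c" if b: "b \<in> A" for b
  proof (rule ccontr)
    assume "\<not> g b (Inf Z) \<le> c"
    moreover obtain t where "0 \<le> t" "t \<le> Inf Z" "g b t = c"
      using IVT'[of "g b" 0 c "Inf Z"] start[OF b] \<open>\<not> g b (Inf Z) \<le> c\<close> a(2) cont[OF b]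
      by (auto intro: continuous_on_subset)
    moreover have "Inf Z \<le> t"
      using \<open>0 \<le> t\<close> \<open>g b t = c\<close> b \<open>bdd_below Z\<close> by (intro cInf_lower) (auto simp: Z_def)
    ultimately show False by auto
  qed
  show ?thesis using that[OF a(2,1)] a(3) below[OF a(1)] below by simp
qed

lemma qvar_finest_unbounded:
  assumes "k < n" "e k \<noteq> 0"
  shows "\<exists>t\<ge>0. 1 \<le> qvar (psum (\<lambda>j. y j + t * e j)) [0..<Suc n]"
proof -
  define t where "t = (\<bar>y k\<bar> + 1) / \<bar>e k\<bar>"
  have "t * \<bar>e k\<bar> = \<bar>y k\<bar> + 1" "\<bar>t * e k\<bar> = t * \<bar>e k\<bar>"
    using assms(2) by (simp_all add: t_def abs_mult)
  then have "1 \<le> \<bar>y k + t * e k\<bar>" by linarith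
  then have "1 \<le> (y k + t * e k)\<^sup>2" by (metis abs_ge_zero one_le_power power2_abs)
  also have "\<dots> \<le> (\<Sum>j\<in>{0..<n}. (y j + t * e j)\<^sup>2)" using assms(1) by (intro member_le_sum) auto
  finally show ?thesis by (intro exI[of _ t]) (simp add: t_def qvar_psum_upt del: upt_Suc)
qed

lemma qvar_line_first_activation:
  assumes le: "\<forall>ps\<in>partitions n. qvar (psum y) ps \<le> 1" and finest: "qvar (psum y) [0..<Suc n] \<noteq> 1"
    and "k < n" "e k \<noteq> 0"
    and fixing: "\<forall>ps\<in>partitions n. qvar (psum y) ps = 1 \<longrightarrow> (\<forall>j\<in>set ps. psum e j = 0)"
  obtains t where "0 \<le> t" "\<forall>ps\<in>partitions n. qvar (psum (\<lambda>j. y j + t * e j)) ps \<le> 1"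
    "card {ps\<in>partitions n. qvar (psum (\<lambda>j. y j + t * e j)) ps < 1}
       < card {ps\<in>partitions n. qvar (psum y) ps < 1}"
proof -
  define g where "g ps t = qvar (psum (\<lambda>j. y j + t * e j)) ps" for ps t
  have g_line: "g ps = (\<lambda>t. qvar (\<lambda>j. psum y j + t * psum e j) ps)" for ps
    by (rule ext) (simp add: g_def psum_add_scaled)
  have active: "g ps t = 1" if "ps \<in> partitions n" "qvar (psum y) ps = 1" for ps t
    unfolding g_line using that fixing by (subst qvar_cong[of _ _ "psum y"]) auto
  define In where "In = {ps\<in>partitions n. qvar (psum y) ps < 1}"
  have "finite In" using finite_partitions by (simp add: In_def)
  have "[0..<Suc n] \<in> In" using le finest upt_in_partitions by (force simp: In_def)
  obtain t0 where "0 \<le> t0" "1 \<le> g [0..<Suc n] t0"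
    using qvar_finest_unbounded[of k n e y, OF \<open>k < n\<close> \<open>e k \<noteq> 0\<close>] by (auto simp: g_def)
  then obtain t ps0 where t: "0 \<le> t" "ps0 \<in> In" "g ps0 t = 1" "\<And>ps. ps \<in> In \<Longrightarrow> g ps t \<le> 1"
    using first_crossing[of In g 1, OF \<open>finite In\<close> _ _ \<open>[0..<Suc n] \<in> In\<close>]
    by (auto simp: g_line continuous_on_qvar_line In_def)
  show ?thesis
  proof (rule that[OF t(1)])
    show "\<forall>ps\<in>partitions n. qvar (psum (\<lambda>j. y j + t * e j)) ps \<le> 1"
      using le active t(4) unfolding g_def[symmetric] by (force simp: In_def)
    have "{ps\<in>partitions n. qvar (psum (\<lambda>j. y j + t * e j)) ps < 1} \<subseteq> In - {ps0}"
      using le active t(3) unfolding g_def[symmetric] by (force simp: In_def)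
    then show "card {ps\<in>partitions n. qvar (psum (\<lambda>j. y j + t * e j)) ps < 1}
        < card {ps\<in>partitions n. qvar (psum y) ps < 1}"
      unfolding In_def[symmetric] using \<open>finite In\<close> t(2)
      by (meson card_Diff1_less card_mono finite_Diff le_less_trans)
  qed
qed

lemma finite_support_step:
  fixes f :: "(nat \<Rightarrow> real) \<Rightarrow> real"
  assumes lin: "\<And>x y a b. inJ x \<Longrightarrow> inJ y \<Longrightarrow> f (\<lambda>n. a * x n + b * y n) = a * f x + b * f y"
    and "1 \<le> n" and supp: "\<And>k. n \<le> k \<Longrightarrow> y k = 0"
    and le: "\<forall>ps\<in>partitions n. qvar (psum y) ps \<le> 1" and finest: "qvar (psum y) [0..<Suc n] \<noteq> 1"
  obtains z where "\<And>k. n \<le> k \<Longrightarrow> z k = 0" "\<forall>ps\<in>partitions n. qvar (psum z) ps \<le> 1"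
    "card {ps\<in>partitions n. qvar (psum z) ps < 1} < card {ps\<in>partitions n. qvar (psum y) ps < 1}"
    "f y \<le> f z"
proof -
  obtain d where d: "\<forall>k\<ge>n. d k = 0" "\<exists>k<n. d k \<noteq> 0"
    "\<forall>ps\<in>partitions n. qvar (psum y) ps = 1 \<longrightarrow> (\<forall>j\<in>set ps. psum d j = 0)"
    using exists_direction_fixing_active[OF \<open>1 \<le> n\<close> le finest] by blast
  define c :: real where "c = (if 0 \<le> f d then 1 else - 1)"
  define e where "e = (\<lambda>j. c * d j)"
  have "inJ d" "inJ e" "inJ y"
    using d(1) supp by (auto intro!: inJ_finite_support[of n] simp: e_def)
  have "f e = c * f d" using lin[OF \<open>inJ d\<close> \<open>inJ d\<close>, of c 0] by (simp add: e_def)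
  then have "0 \<le> f e" by (simp add: c_def)
  obtain k where "k < n" "e k \<noteq> 0" using d(2) by (auto simp: e_def c_def)
  moreover have "\<forall>ps\<in>partitions n. qvar (psum y) ps = 1 \<longrightarrow> (\<forall>j\<in>set ps. psum e j = 0)"
    using d(3) by (simp add: e_def psum_def sum_distrib_left[symmetric])
  ultimately obtain t where t: "0 \<le> t" "\<forall>ps\<in>partitions n. qvar (psum (\<lambda>j. y j + t * e j)) ps \<le> 1"
    "card {ps\<in>partitions n. qvar (psum (\<lambda>j. y j + t * e j)) ps < 1}
       < card {ps\<in>partitions n. qvar (psum y) ps < 1}"
    using qvar_line_first_activation[OF le finest] by blast
  moreover have "f (\<lambda>j. y j + t * e j) = f y + t * f e"
    using lin[OF \<open>inJ y\<close> \<open>inJ e\<close>, of 1 t] by simp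
  moreover have "n \<le> k \<Longrightarrow> y k + t * e k = 0" for k using supp d(1) by (simp add: e_def)
  ultimately show ?thesis using that[of "\<lambda>j. y j + t * e j"] \<open>0 \<le> f e\<close> by simp
qed

lemma finite_support_bound:
  fixes f :: "(nat \<Rightarrow> real) \<Rightarrow> real"
  assumes lin: "\<And>x y a b. inJ x \<Longrightarrow> inJ y \<Longrightarrow> f (\<lambda>n. a * x n + b * y n) = a * f x + b * f y"
    and sphere: "\<And>y. inJ y \<Longrightarrow> NPR_hered y \<Longrightarrow> l2_norm_seq y = 1 \<Longrightarrow> f y \<le> \<sigma>"
    and "1 \<le> n" and supp: "\<And>k. n \<le> k \<Longrightarrow> y k = 0" and le: "\<forall>ps\<in>partitions n. qvar (psum y) ps \<le> 1"
  shows "f y \<le> \<sigma>"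
  using supp le
proof (induction "card {ps\<in>partitions n. qvar (psum y) ps < 1}" arbitrary: y rule: less_induct)
  case less
  show ?case
  proof (cases "qvar (psum y) [0..<Suc n] = 1")
    case True
    then show ?thesis using unit_sphere_of_finest_active[OF less.prems] sphere by blast
  next
    case False
    obtain z where "\<And>k. n \<le> k \<Longrightarrow> z k = 0" "\<forall>ps\<in>partitions n. qvar (psum z) ps \<le> 1"
      "card {ps\<in>partitions n. qvar (psum z) ps < 1} < card {ps\<in>partitions n. qvar (psum y) ps < 1}"
      "f y \<le> f z"
      using finite_support_step[of f n y, OF lin \<open>1 \<le> n\<close> less.prems False] by blast
    with less.hyps show ?thesis by fastforce
  qed
qed

section \<open>The dual norm\<close>

lemma inJdual_bound: "inJdual f \<Longrightarrow> \<exists>C\<ge>0. \<forall>x. inJ x \<longrightarrow> \<bar>f x\<bar> \<le> C * J_norm x"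
  unfolding inJdual_def
  by (metis J_norm_nonneg abs_ge_zero abs_ge_self mult_right_mono order_trans)

lemma bdd_above_sphere_values:
  assumes "inJdual f"
  shows "bdd_above {f x | x. inJ x \<and> NPR_hered x \<and> l2_norm_seq x = 1}"
proof -
  obtain C where "0 \<le> C" and C: "\<And>x. inJ x \<Longrightarrow> \<bar>f x\<bar> \<le> C * J_norm x"
    using inJdual_bound[OF assms] by blast
  have "f x \<le> C" if "inJ x" "NPR_hered x" "l2_norm_seq x = 1" for x
    using C[OF that(1)] J_norm_le_l2_norm[OF that(1,2)] that(3) \<open>0 \<le> C\<close>
      mult_left_le[of "J_norm x" C] by linarith
  then show ?thesis unfolding bdd_above_def by blast
qed

lemma unit_vector_in_sphere:
  defines "e \<equiv> \<lambda>j::nat. if j = 0 then 1 else (0::real)"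
  shows "inJ e \<and> NPR_hered e \<and> l2_norm_seq e = 1"
proof -
  have "restr e I sums (if 0 \<in> I then 1 else 0)"
    "(\<lambda>k. (restr e I k)\<^sup>2) sums (if 0 \<in> I then 1 else 0)" for I
    using sums_finite[of "{0}" "restr e I"] sums_finite[of "{0}" "\<lambda>k. (restr e I k)\<^sup>2"]
    by (auto simp: e_def restr_def)
  then have sum_restr_e: "(\<Sum>k. restr e I k) = (if 0 \<in> I then 1 else 0)"
    "(\<Sum>k. (restr e I k)\<^sup>2) = (if 0 \<in> I then 1 else 0)" for I
    by (simp_all add: sums_unique[symmetric])
  have "NPR_hered e" unfolding NPR_hered_def NPR_def by (simp add: sum_restr_e)
  moreover have "restr e UNIV = e" by (simp add: restr_def)
  then have "l2_norm_seq e = 1" using sum_restr_e(2)[of UNIV] by (simp add: l2_norm_seq_def)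
  moreover have "inJ e" by (rule inJ_finite_support[of 1]) (simp add: e_def)
  ultimately show ?thesis by blast
qed

lemma qvar_psum_truncation_le:
  assumes "inJ x" "ps \<in> partitions N"
  shows "qvar (psum (restr x {..<N})) ps \<le> (J_norm x)\<^sup>2"
proof -
  have "psum (restr x {..<N}) j = psum x j" if "j \<in> set ps" for j
  proof -
    have "j \<le> N" using assms(2) sorted_wrt_less_le_last that by (auto simp: partitions_def)
    then show ?thesis unfolding psum_def by (simp add: sum_restr Int_absorb2)
  qed
  then have "qvar (psum (restr x {..<N})) ps = qvar (psum x) ps" by (rule qvar_cong)
  also have "\<dots> \<le> (J_norm x)\<^sup>2"
    using assms qvar_psum_le_J_norm by (auto simp: partitions_def)
  finally show ?thesis .
qed

lemma truncation_abs_le: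
  fixes f :: "(nat \<Rightarrow> real) \<Rightarrow> real"
  assumes lin: "\<And>x y a b. inJ x \<Longrightarrow> inJ y \<Longrightarrow> f (\<lambda>n. a * x n + b * y n) = a * f x + b * f y"
    and sphere: "\<And>y. inJ y \<Longrightarrow> NPR_hered y \<Longrightarrow> l2_norm_seq y = 1 \<Longrightarrow> f y \<le> \<sigma>"
    and x: "inJ x" "J_norm x \<le> 1" and "1 \<le> N"
  shows "\<bar>f (restr x {..<N})\<bar> \<le> \<sigma>"
proof -
  define y where "y = restr x {..<N}"
  have supp: "\<And>k. N \<le> k \<Longrightarrow> y k = 0" "\<And>k. N \<le> k \<Longrightarrow> - y k = 0" by (simp_all add: y_def restr_def)
  have "(J_norm x)\<^sup>2 \<le> 1" using x J_norm_nonneg by (simp add: abs_square_le_1)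
  then have le: "\<forall>ps\<in>partitions N. qvar (psum y) ps \<le> 1"
    using qvar_psum_truncation_le[OF x(1)] unfolding y_def by (meson order_trans)
  moreover have "psum (\<lambda>j. - y j) = (\<lambda>j. - psum y j)" by (auto simp: psum_def sum_negf)
  ultimately have le_neg: "\<forall>ps\<in>partitions N. qvar (psum (\<lambda>j. - y j)) ps \<le> 1"
    by (simp add: qvar_uminus)
  have "f y \<le> \<sigma>" "f (\<lambda>j. - y j) \<le> \<sigma>"
    by (rule finite_support_bound[OF lin sphere \<open>1 \<le> N\<close>], use supp le le_neg in auto)+
  moreover have "f (\<lambda>j. - y j) = - f y"
    using lin[OF inJ_finite_support inJ_finite_support, of N y N y "-1" 0] supp by simp
  ultimately show ?thesis unfolding y_def[symmetric] by linarith
qed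

lemma dual_abs_le_sphere_bound:
  fixes f :: "(nat \<Rightarrow> real) \<Rightarrow> real"
  assumes f: "inJdual f" and sphere: "\<And>y. inJ y \<Longrightarrow> NPR_hered y \<Longrightarrow> l2_norm_seq y = 1 \<Longrightarrow> f y \<le> \<sigma>"
    and x: "inJ x" "J_norm x \<le> 1"
  shows "\<bar>f x\<bar> \<le> \<sigma>"
proof (rule field_le_epsilon)
  fix e :: real assume "0 < e"
  have lin: "\<And>x y a b. inJ x \<Longrightarrow> inJ y \<Longrightarrow> f (\<lambda>n. a * x n + b * y n) = a * f x + b * f y"
    using f unfolding inJdual_def by blast
  obtain C where "0 \<le> C" and C: "\<And>x. inJ x \<Longrightarrow> \<bar>f x\<bar> \<le> C * J_norm x"
    using inJdual_bound[OF f] by blast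
  obtain N where "1 \<le> N" and tail: "J_norm (restr x {N..}) < e / (C + 1)"
    using J_norm_tail_small[OF x(1), of "e / (C + 1)" 1] \<open>0 < e\<close> \<open>0 \<le> C\<close> by auto
  define y where "y = restr x {..<N}"
  define r where "r = (\<lambda>n. x n - y n)"
  have "r = restr x {N..}" by (auto simp: r_def y_def restr_def)
  have "inJ y" by (rule inJ_finite_support[of N]) (simp add: y_def restr_def)
  with x(1) have "inJ r" unfolding r_def by (rule inJ_diff)
  have "\<bar>f r\<bar> \<le> e"
  proof -
    have "\<bar>f r\<bar> \<le> C * J_norm r" using C[OF \<open>inJ r\<close>] .
    also have "\<dots> \<le> C * (e / (C + 1))"
      using tail \<open>0 \<le> C\<close> \<open>r = restr x {N..}\<close> by (intro mult_left_mono) auto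
    also have "\<dots> \<le> e" using \<open>0 < e\<close> \<open>0 \<le> C\<close> by (simp add: field_simps)
    finally show ?thesis .
  qed
  moreover have "f x = f y + f r"
    using lin[OF \<open>inJ y\<close> \<open>inJ r\<close>, of 1 1] by (simp add: r_def)
  moreover have "\<bar>f y\<bar> \<le> \<sigma>"
    unfolding y_def using truncation_abs_le[OF lin sphere x \<open>1 \<le> N\<close>] .
  ultimately show "\<bar>f x\<bar> \<le> \<sigma> + e" by linarith
qed

theorem corollary3p20:
  fixes f :: "(nat \<Rightarrow> real) \<Rightarrow> real"
  assumes "inJdual f"
  shows "dual_norm f = Sup {f x | x. inJ x \<and> NPR_hered x \<and> l2_norm_seq x = 1}"
proof -
  define R where "R = {f x | x. inJ x \<and> NPR_hered x \<and> l2_norm_seq x = 1}"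
  define D where "D = {\<bar>f x\<bar> | x. inJ x \<and> J_norm x \<le> 1}"
  have sphere_in_ball: "J_norm x \<le> 1" if "inJ x" "NPR_hered x" "l2_norm_seq x = 1" for x
    using J_norm_le_l2_norm that by fastforce
  have "R \<noteq> {}" "D \<noteq> {}"
    using unit_vector_in_sphere sphere_in_ball unfolding R_def D_def by blast+
  have "bdd_above R" unfolding R_def by (rule bdd_above_sphere_values[OF assms])
  have D_le: "d \<le> Sup R" if "d \<in> D" for d
    using that dual_abs_le_sphere_bound[OF assms, of "Sup R"] cSup_upper[OF _ \<open>bdd_above R\<close>]
    unfolding D_def R_def by blast
  have "Sup R \<le> Sup D"
  proof (rule cSup_least[OF \<open>R \<noteq> {}\<close>])
    fix r assume "r \<in> R"
    then obtain x where "r = f x" "\<bar>f x\<bar> \<in> D" unfolding R_def D_def using sphere_in_ball by blast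
    moreover have "bdd_above D" using D_le by (auto simp: bdd_above_def)
    ultimately show "r \<le> Sup D" using cSup_upper by fastforce
  qed
  moreover have "Sup D \<le> Sup R" using D_le by (rule cSup_least[OF \<open>D \<noteq> {}\<close>])
  ultimately show ?thesis unfolding dual_norm_def D_def[symmetric] R_def[symmetric] by simp
qed

end
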